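(* For every $k \ge 3$, the space $\mathrm{Conf}_2(B_k)$ is homotopy equivalent to a connected graph whose first Betti number is at least $k-1$.
   Context: The banana graph $B_k$ is the graph with two vertices connected by $k$ edges. $\mathrm{Conf}_n(X)=\{(x_1,\dots,x_n)\in X^n : x_i\neq x_j \text{ for } i\neq j\}$. *)

theory Defs
  imports "HOL-Analysis.Analysis"
begin

text \<open>Geometric realization of the banana graph B_k in the complex plane:
  two vertices -1 and 1, and for each j < k an edge which is the polygonal arc
  from -1 through j*i to 1.  Distinct arcs meet only at the two endpoints.\<close>
definition banana :: "nat \<Rightarrow> complex set" where
  "banana k = (\<Union>j<k. closed_segment (-1) (of_nat j * \<i>) \<union> closed_segment (of_nat j * \<i>) 1)"

definition Conf :: "nat \<Rightarrow> 'a topology \<Rightarrow> (nat \<Rightarrow> 'a) topology" where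
  "Conf n X = subtopology (product_topology (\<lambda>_. X) {..<n})
     {x \<in> topspace (product_topology (\<lambda>_. X) {..<n}). \<forall>i<n. \<forall>j<n. i \<noteq> j \<longrightarrow> x i \<noteq> x j}"

text \<open>A finite multigraph (loops and multiple edges allowed): a finite vertex set
  V of naturals and a list E of edges (pairs of endpoints).\<close>
definition fin_graph :: "nat set \<Rightarrow> (nat \<times> nat) list \<Rightarrow> bool" where
  "fin_graph V E \<longleftrightarrow> finite V \<and> (\<forall>(u,v)\<in>set E. u \<in> V \<and> v \<in> V)"

text \<open>Disjoint union of the edge intervals (edge i is {2i} \<times> [0,1]) and the
  vertices (vertex v is the point (2v+1, 0)).\<close>
definition graph_cells :: "nat set \<Rightarrow> (nat \<times> nat) list \<Rightarrow> (nat \<times> real) set" where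
  "graph_cells V E = {(2 * i, t) | i t. i < length E \<and> 0 \<le> t \<and> t \<le> 1} \<union> (\<lambda>v. (2 * v + 1, 0)) ` V"

definition graph_cells_top :: "nat set \<Rightarrow> (nat \<times> nat) list \<Rightarrow> (nat \<times> real) topology" where
  "graph_cells_top V E = subtopology (prod_topology (discrete_topology UNIV) euclideanreal) (graph_cells V E)"

definition graph_glue :: "(nat \<times> nat) list \<Rightarrow> nat \<times> real \<Rightarrow> nat \<times> real" where
  "graph_glue E p = (let n = fst p; t = snd p in
     if even n \<and> n div 2 < length E \<and> t = 0 then (2 * fst (E ! (n div 2)) + 1, 0)
     else if even n \<and> n div 2 < length E \<and> t = 1 then (2 * snd (E ! (n div 2)) + 1, 0)
     else p)"

definition quotient_topology :: "'a topology \<Rightarrow> ('a \<Rightarrow> 'b) \<Rightarrow> 'b topology" where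
  "quotient_topology X f = topology (\<lambda>U. U \<subseteq> f ` topspace X \<and> openin X {x \<in> topspace X. f x \<in> U})"

lemma istopology_quotient:
  "istopology (\<lambda>U. U \<subseteq> f ` topspace X \<and> openin X {x \<in> topspace X. f x \<in> U})"
  unfolding istopology_def
proof (intro conjI allI impI ballI)
  fix S T assume a: "S \<subseteq> f ` topspace X \<and> openin X {x \<in> topspace X. f x \<in> S}"
    "T \<subseteq> f ` topspace X \<and> openin X {x \<in> topspace X. f x \<in> T}"
  show "S \<inter> T \<subseteq> f ` topspace X" using a by blast
  have "{x \<in> topspace X. f x \<in> S \<inter> T} = {x \<in> topspace X. f x \<in> S} \<inter> {x \<in> topspace X. f x \<in> T}" by blast
  then show "openin X {x \<in> topspace X. f x \<in> S \<inter> T}" using a by auto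
next
  fix K assume a: "\<forall>U\<in>K. U \<subseteq> f ` topspace X \<and> openin X {x \<in> topspace X. f x \<in> U}"
  show "\<Union>K \<subseteq> f ` topspace X" using a by blast
  have "{x \<in> topspace X. f x \<in> \<Union>K} = (\<Union>U\<in>K. {x \<in> topspace X. f x \<in> U})" by blast
  then show "openin X {x \<in> topspace X. f x \<in> \<Union>K}" using a by auto
qed

lemma openin_quotient_topology:
  "openin (quotient_topology X f) U \<longleftrightarrow> U \<subseteq> f ` topspace X \<and> openin X {x \<in> topspace X. f x \<in> U}"
  unfolding quotient_topology_def by (simp only: topology_inverse'[OF istopology_quotient])

definition graph_realization :: "nat set \<Rightarrow> (nat \<times> nat) list \<Rightarrow> (nat \<times> real) topology" where
  "graph_realization V E = quotient_topology (graph_cells_top V E) (graph_glue E)"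

definition graph_betti1 :: "nat set \<Rightarrow> (nat \<times> nat) list \<Rightarrow> int" where
  "graph_betti1 V E = int (length E) - int (card V)
     + int (card (connected_components_of (graph_realization V E)))"

end

theory Submission
  imports Defs
begin

text \<open>Realise \<open>B\<^sub>k\<close> in \<open>\<complex>\<close> as \<open>k\<close> arcs from \<open>-1\<close> to \<open>1\<close>, a point of arc \<open>i\<close> being determined by its
  real part. Call a configuration \<open>(x, y)\<close> opposite if \<open>x\<close> and \<open>y\<close> lie on different arcs and
  \<open>Re y = - Re x\<close>. The opposite configurations form a graph with the two vertices \<open>(-1, 1)\<close> and
  \<open>(1, -1)\<close> and one edge for each of the \<open>k(k - 1)\<close> ordered pairs of distinct arcs, so its first
  Betti number is \<open>k(k - 1) - 1 \<ge> k - 1\<close>. The space \<open>Conf\<^sub>2(B\<^sub>k)\<close> deformation retracts onto it: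
  cut it into the closed pieces where \<open>x\<close> and \<open>y\<close> lie on fixed arcs (and, for a common arc, in a
  fixed order); on each piece both points slide linearly in their real parts along their arcs to an
  opposite configuration. The targets are chosen so that a point sitting at a vertex stays there,
  hence the deformations of the pieces agree on overlaps and paste together.\<close>

definition conf2_set :: "'a set \<Rightarrow> ('a \<times> 'a) set" where
  "conf2_set B = {(x, y). x \<in> B \<and> y \<in> B \<and> x \<noteq> y}"

lemma Conf2_homeomorphic_off_diagonal:
  "Conf 2 X homeomorphic_space subtopology (prod_topology X X) {z. fst z \<noteq> snd z}"
proof -
  let ?P = "product_topology (\<lambda>_. X) {..<2::nat}"
  let ?C = "{x \<in> topspace ?P. \<forall>i<2. \<forall>j<2. i \<noteq> j \<longrightarrow> x i \<noteq> x j}"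
  let ?Y = "subtopology (prod_topology X X) {z. fst z \<noteq> snd z}"
  let ?f = "\<lambda>x. (x 0, x 1)"
  let ?g = "\<lambda>z n. if n = 0 then fst z else if n = 1 then snd z else undefined"
  have "(\<forall>i<2. \<forall>j<2. i \<noteq> j \<longrightarrow> x i \<noteq> x j) \<longleftrightarrow> x 0 \<noteq> x (1::nat)" for x :: "nat \<Rightarrow> 'a"
    by (auto simp: less_2_cases_iff)
  then have C: "?C = {x \<in> PiE {..<2} (\<lambda>_. topspace X). x 0 \<noteq> x 1}"
    by auto
  have "homeomorphic_maps (subtopology ?P ?C) ?Y ?f ?g"
    unfolding homeomorphic_maps_def
  proof (intro conjI ballI)
    have "continuous_map ?P X (\<lambda>x. x i)" if "i < 2" for i
      using that by (intro continuous_map_product_projection) auto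
    then have "continuous_map (subtopology ?P ?C) (prod_topology X X) ?f"
      by (intro continuous_map_pairedI continuous_map_from_subtopology) auto
    then show "continuous_map (subtopology ?P ?C) ?Y ?f"
      by (auto simp: continuous_map_in_subtopology C)
  next
    have "continuous_map ?Y X (\<lambda>z. ?g z n)" if "n < 2" for n :: nat
      using that continuous_map_from_subtopology[OF continuous_map_fst]
        continuous_map_from_subtopology[OF continuous_map_snd]
      by (auto simp: less_2_cases_iff)
    then have "continuous_map ?Y ?P ?g"
      by (auto simp: continuous_map_componentwise extensional_def)
    moreover have "?g \<in> topspace ?Y \<rightarrow> ?C"
    proof
      fix z assume "z \<in> topspace ?Y"
      then have "fst z \<in> topspace X" "snd z \<in> topspace X" "fst z \<noteq> snd z"
        by auto
      then show "?g z \<in> ?C"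
        unfolding C by (auto simp: PiE_iff extensional_def)
    qed
    ultimately show "continuous_map ?Y (subtopology ?P ?C) ?g"
      by (rule continuous_map_into_subtopology)
  next
    fix x assume "x \<in> topspace (subtopology ?P ?C)"
    then have x: "x \<in> PiE {..<2} (\<lambda>_. topspace X)"
      unfolding C by auto
    show "?g (?f x) = x"
    proof
      fix n :: nat
      show "?g (?f x) n = x n"
        using PiE_arb[OF x, of n] by (cases "n < 2") (auto simp: less_2_cases_iff)
    qed
  qed simp
  then show ?thesis
    unfolding Conf_def homeomorphic_space_def by blast
qed

lemma Conf2_homeomorphic_conf2_set:
  "Conf 2 (top_of_set B) homeomorphic_space top_of_set (conf2_set B)"
proof -
  have "conf2_set B = (B \<times> B) \<inter> {z. fst z \<noteq> snd z}"
    by (auto simp: conf2_set_def)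
  then show ?thesis
    using Conf2_homeomorphic_off_diagonal[of "top_of_set B"] by (simp add: subtopology_subtopology)
qed

lemma topspace_quotient_topology [simp]: "topspace (quotient_topology X q) = q ` topspace X"
proof
  show "topspace (quotient_topology X q) \<subseteq> q ` topspace X"
    using openin_topspace[of "quotient_topology X q"] unfolding openin_quotient_topology by blast
  have "{x \<in> topspace X. q x \<in> q ` topspace X} = topspace X"
    by auto
  then have "openin (quotient_topology X q) (q ` topspace X)"
    by (simp add: openin_quotient_topology)
  then show "q ` topspace X \<subseteq> topspace (quotient_topology X q)"
    by (rule openin_subset)
qed

lemma quotient_map_quotient_topology: "quotient_map X (quotient_topology X q) q"
  by (auto simp: quotient_map_def openin_quotient_topology)

lemma homeomorphic_space_quotient_maps_same_fibres:
  assumes f: "quotient_map X Y f" and g: "quotient_map X Z g"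
    and fibres: "\<And>x y. x \<in> topspace X \<Longrightarrow> y \<in> topspace X \<Longrightarrow> f x = f y \<longleftrightarrow> g x = g y"
  shows "Y homeomorphic_space Z"
proof -
  obtain g' where g': "continuous_map Y Z g'" "\<And>x. x \<in> topspace X \<Longrightarrow> g' (f x) = g x"
    using quotient_map_lift_exists[OF f quotient_imp_continuous_map[OF g]] fibres by metis
  obtain f' where f': "continuous_map Z Y f'" "\<And>x. x \<in> topspace X \<Longrightarrow> f' (g x) = f x"
    using quotient_map_lift_exists[OF g quotient_imp_continuous_map[OF f]] fibres by metis
  have "homeomorphic_maps Y Z g' f'"
    unfolding homeomorphic_maps_def
    using g' f' quotient_imp_surjective_map[OF f] quotient_imp_surjective_map[OF g]
    by (metis imageE)
  then show ?thesis
    unfolding homeomorphic_space_def by blast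
qed

lemma quotient_topology_homeomorphic_space:
  assumes "compact_space X" "Hausdorff_space Y" "continuous_map X Y F" "F ` topspace X = topspace Y"
    and "\<And>x y. x \<in> topspace X \<Longrightarrow> y \<in> topspace X \<Longrightarrow> q x = q y \<longleftrightarrow> F x = F y"
  shows "quotient_topology X q homeomorphic_space Y"
  using assms
  by (intro homeomorphic_space_quotient_maps_same_fibres[OF quotient_map_quotient_topology]
      continuous_closed_imp_quotient_map continuous_imp_closed_map)

lemma continuous_map_prod_discrete:
  assumes "\<And>n. continuous_map Y Z (\<lambda>t. f (n, t))"
  shows "continuous_map (prod_topology (discrete_topology UNIV) Y) Z f"
proof (rule pasting_lemma)
  let ?X = "prod_topology (discrete_topology UNIV) Y"
  fix n :: 'a
  show "openin ?X ({n} \<times> topspace Y)"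
    by (simp add: openin_prod_Times_iff)
  have "continuous_map (subtopology ?X ({n} \<times> topspace Y)) Z ((\<lambda>t. f (n, t)) \<circ> snd)"
    by (intro continuous_map_compose[OF continuous_map_from_subtopology[OF continuous_map_snd] assms])
  then show "continuous_map (subtopology ?X ({n} \<times> topspace Y)) Z f"
    by (rule continuous_map_eq) auto
qed auto

lemma continuous_map_graph_cells_top:
  "(\<And>n. continuous_on UNIV (\<lambda>t. f (n, t))) \<Longrightarrow> continuous_map (graph_cells_top V E) euclidean f"
  unfolding graph_cells_top_def
  by (intro continuous_map_from_subtopology continuous_map_prod_discrete) simp

lemma compact_space_graph_cells_top:
  assumes "finite V"
  shows "compact_space (graph_cells_top V E)"
proof -
  let ?X = "prod_topology (discrete_topology (UNIV::nat set)) euclideanreal"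
  have cells: "graph_cells V E = (\<Union>i<length E. {2 * i} \<times> {0..1}) \<union> (\<Union>v\<in>V. {(2 * v + 1, 0)})"
    by (auto simp: graph_cells_def)
  have "compactin ?X (graph_cells V E)"
    unfolding cells using assms
    by (intro compactin_Un compactin_Union) (auto simp: compactin_Times)
  then show ?thesis
    unfolding graph_cells_top_def by (rule compact_space_subtopology)
qed

lemma graph_betti1_connected:
  assumes "connected_space (graph_realization V E)" "graph_realization V E \<noteq> trivial_topology"
  shows "graph_betti1 V E = int (length E) - int (card V) + 1"
  using connected_components_of_connected_space[OF assms(1)] assms(2)
  by (simp add: graph_betti1_def)

section \<open>The arcs of the banana graph\<close>

definition arc_pt :: "nat \<Rightarrow> real \<Rightarrow> complex" where
  "arc_pt i p = Complex p (real i * (1 - \<bar>p\<bar>))"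

definition banana_arc :: "nat \<Rightarrow> complex set" where
  "banana_arc i = arc_pt i ` {-1..1}"

lemma Re_arc_pt [simp]: "Re (arc_pt i p) = p"
  and Im_arc_pt [simp]: "Im (arc_pt i p) = real i * (1 - \<bar>p\<bar>)"
  by (simp_all add: arc_pt_def)

lemma arc_pt_vertex: "\<bar>p\<bar> = 1 \<Longrightarrow> arc_pt i p = of_real p"
  by (simp add: arc_pt_def complex_eq_iff)

lemma arc_pt_minus_one [simp]: "arc_pt i (-1) = -1"
  and arc_pt_one [simp]: "arc_pt i 1 = 1"
  by (simp_all add: arc_pt_vertex)

lemma mem_banana_arc_iff:
  "z \<in> banana_arc i \<longleftrightarrow> -1 \<le> Re z \<and> Re z \<le> 1 \<and> Im z = real i * (1 - \<bar>Re z\<bar>)"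
  by (auto simp: banana_arc_def complex_eq_iff image_iff intro!: bexI[of _ "Re z"])

lemma arc_pt_Re: "z \<in> banana_arc i \<Longrightarrow> arc_pt i (Re z) = z"
  by (simp add: mem_banana_arc_iff complex_eq_iff)

lemma arc_pt_in_banana_arc: "-1 \<le> p \<Longrightarrow> p \<le> 1 \<Longrightarrow> arc_pt i p \<in> banana_arc i"
  by (simp add: mem_banana_arc_iff)

lemma banana_arc_Re_bounds: "z \<in> banana_arc i \<Longrightarrow> -1 \<le> Re z \<and> Re z \<le> 1"
  by (simp add: mem_banana_arc_iff)

lemma banana_arc_eqI: "z \<in> banana_arc i \<Longrightarrow> w \<in> banana_arc i \<Longrightarrow> Re z = Re w \<Longrightarrow> z = w"
  by (simp add: mem_banana_arc_iff complex_eq_iff)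

lemma banana_arcs_meet_at_vertex:
  assumes "z \<in> banana_arc i" "z \<in> banana_arc j" "i \<noteq> j"
  shows "\<bar>Re z\<bar> = 1"
proof -
  have "(real i - real j) * (1 - \<bar>Re z\<bar>) = 0"
    using assms(1,2) by (simp add: mem_banana_arc_iff algebra_simps)
  with assms(3) show ?thesis by simp
qed

lemma banana_arc_vertex: "z \<in> banana_arc i \<Longrightarrow> \<bar>Re z\<bar> = 1 \<Longrightarrow> z = of_real (Re z)"
  by (metis arc_pt_Re arc_pt_vertex)

lemma continuous_on_arc_pt [continuous_intros]:
  "continuous_on S f \<Longrightarrow> continuous_on S (\<lambda>x. arc_pt i (f x))"
  unfolding arc_pt_def Complex_eq by (intro continuous_intros)

lemma compact_banana_arc: "compact (banana_arc i)"
  unfolding banana_arc_def by (intro compact_continuous_image continuous_intros) auto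

lemma closed_banana_arc: "closed (banana_arc i)"
  by (simp add: compact_banana_arc compact_imp_closed)

lemma banana_arc_eq_segments:
  "banana_arc j = closed_segment (-1) (of_nat j * \<i>) \<union> closed_segment (of_nat j * \<i>) 1"
proof (intro equalityI subsetI)
  fix z assume "z \<in> closed_segment (-1) (of_nat j * \<i>) \<union> closed_segment (of_nat j * \<i>) 1"
  then obtain u where "0 \<le> u" "u \<le> 1"
    and "z = (1 - u) *\<^sub>R (-1) + u *\<^sub>R (of_nat j * \<i>) \<or> z = (1 - u) *\<^sub>R (of_nat j * \<i>) + u *\<^sub>R 1"
    by (auto simp: closed_segment_def)
  then show "z \<in> banana_arc j"
    by (auto simp: mem_banana_arc_iff scaleR_conv_of_real)
next
  fix z assume z: "z \<in> banana_arc j"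
  then have bounds: "-1 \<le> Re z" "Re z \<le> 1" and Im: "Im z = real j * (1 - \<bar>Re z\<bar>)"
    by (auto simp: mem_banana_arc_iff)
  show "z \<in> closed_segment (-1) (of_nat j * \<i>) \<union> closed_segment (of_nat j * \<i>) 1"
  proof (cases "Re z \<le> 0")
    case True
    have "z = (1 - (Re z + 1)) *\<^sub>R (-1) + (Re z + 1) *\<^sub>R (of_nat j * \<i>)"
      using Im True by (simp add: complex_eq_iff algebra_simps)
    then have "z \<in> closed_segment (-1) (of_nat j * \<i>)"
      using bounds True unfolding closed_segment_def by (intro CollectI exI[of _ "Re z + 1"]) auto
    then show ?thesis ..
  next
    case False
    have "z = (1 - Re z) *\<^sub>R (of_nat j * \<i>) + Re z *\<^sub>R 1"
      using Im False by (simp add: complex_eq_iff algebra_simps)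
    then have "z \<in> closed_segment (of_nat j * \<i>) 1"
      using bounds False unfolding closed_segment_def by (intro CollectI exI[of _ "Re z"]) auto
    then show ?thesis ..
  qed
qed

lemma mem_banana_iff: "z \<in> banana k \<longleftrightarrow> (\<exists>i<k. z \<in> banana_arc i)"
  by (auto simp: banana_def banana_arc_eq_segments)

lemma arc_pt_inj:
  assumes "\<bar>p\<bar> < 1" "arc_pt i p = arc_pt j q"
  shows "i = j" "p = q"
proof -
  show "p = q"
    using assms(2) by (metis Re_arc_pt)
  with assms have "real i * (1 - \<bar>p\<bar>) = real j * (1 - \<bar>p\<bar>)"
    by (metis Im_arc_pt)
  with assms(1) show "i = j"
    by simp
qed

section \<open>Deforming two-point configurations onto the opposite ones\<close>

datatype piece_kind = Cross | Ordered | Reversed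

definition conf_piece :: "nat \<Rightarrow> nat \<Rightarrow> piece_kind \<Rightarrow> (complex \<times> complex) set" where
  "conf_piece i j c = {(x, y). x \<in> banana_arc i \<and> y \<in> banana_arc j
     \<and> (c = Ordered \<longrightarrow> Re x \<le> Re y) \<and> (c = Reversed \<longrightarrow> Re y \<le> Re x)}"

definition pieces :: "nat \<Rightarrow> (nat \<times> nat \<times> piece_kind) set" where
  "pieces k = {(i, j, c). i < k \<and> j < k \<and> (c = Cross \<longleftrightarrow> i \<noteq> j)}"

lemma finite_pieces: "finite (pieces k)"
proof -
  have "c \<in> {Cross, Ordered, Reversed}" for c
    by (cases c) auto
  then have "pieces k \<subseteq> {..<k} \<times> {..<k} \<times> {Cross, Ordered, Reversed}"
    by (auto simp: pieces_def)
  then show ?thesis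
    by (rule finite_subset) auto
qed

lemma closed_conf_piece: "closed (conf_piece i j c)"
proof -
  have le: "closed {z::complex \<times> complex. Re (fst z) \<le> Re (snd z)}"
    "closed {z::complex \<times> complex. Re (snd z) \<le> Re (fst z)}"
    by (intro closed_Collect_le continuous_intros)+
  have "conf_piece i j c = (banana_arc i \<times> banana_arc j) \<inter>
      (case c of Cross \<Rightarrow> UNIV
        | Ordered \<Rightarrow> {z. Re (fst z) \<le> Re (snd z)} | Reversed \<Rightarrow> {z. Re (snd z) \<le> Re (fst z)})"
    by (cases c) (auto simp: conf_piece_def)
  then show ?thesis
    using le by (cases c) (simp_all add: closed_Int closed_Times closed_banana_arc)
qed

lemma conf_piece_cover:
  assumes "x \<in> banana k" "y \<in> banana k"
  obtains i j c where "(i, j, c) \<in> pieces k" "(x, y) \<in> conf_piece i j c"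
proof -
  obtain i j where "i < k" "j < k" "x \<in> banana_arc i" "y \<in> banana_arc j"
    using assms by (auto simp: mem_banana_iff)
  then show ?thesis
    using that[of i j Cross] that[of i j Ordered] that[of i j Reversed]
    by (cases "i = j"; cases "Re x \<le> Re y") (auto simp: pieces_def conf_piece_def)
qed

lemma conf_piece_Re_less:
  assumes "(i, j, c) \<in> pieces k" "(x, y) \<in> conf_piece i j c" "x \<noteq> y"
  shows "c = Ordered \<Longrightarrow> Re x < Re y" and "c = Reversed \<Longrightarrow> Re y < Re x"
  using assms banana_arc_eqI by (fastforce simp: pieces_def conf_piece_def)+

locale conf_re_pair =
  fixes p q :: real
  assumes bounds: "-1 \<le> p" "p \<le> 1" "-1 \<le> q" "q \<le> 1"
    and not_both_left: "\<not> (p = -1 \<and> q = -1)" and not_both_right: "\<not> (p = 1 \<and> q = 1)"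

lemma conf_re_pair_of_piece:
  assumes "(x, y) \<in> conf_piece i j c" "x \<noteq> y"
  shows "conf_re_pair (Re x) (Re y)"
proof -
  have x: "x \<in> banana_arc i" and y: "y \<in> banana_arc j"
    using assms(1) by (auto simp: conf_piece_def)
  show ?thesis
    using banana_arc_vertex[OF x] banana_arc_vertex[OF y] assms(2)
      banana_arc_Re_bounds[OF x] banana_arc_Re_bounds[OF y]
    by unfold_locales fastforce+
qed

text \<open>For points on different arcs the deformation ends at the opposite configuration
  \<open>(2w - 1, 1 - 2w)\<close>. The numerator of the weight \<open>w\<close> measures how far \<open>(Re x, Re y)\<close> is from
  \<open>x = -1\<close> or \<open>y = 1\<close>, the other summand of the denominator how far it is from \<open>x = 1\<close> or
  \<open>y = -1\<close>. Hence a point sitting at a vertex stays there, which makes the deformation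
  independent of the arc chosen for a vertex.\<close>

definition split_weight :: "real \<Rightarrow> real \<Rightarrow> real" where
  "split_weight p q = min (p + 1) (1 - q) / (min (p + 1) (1 - q) + min (1 - p) (q + 1))"

definition target :: "piece_kind \<Rightarrow> real \<Rightarrow> real \<Rightarrow> real \<times> real" where
  "target c p q = (case c of
      Cross \<Rightarrow> (2 * split_weight p q - 1, 1 - 2 * split_weight p q)
    | Ordered \<Rightarrow> (-1, 1)
    | Reversed \<Rightarrow> (1, -1))"

context conf_re_pair
begin

lemma split_weight_denominator_pos: "0 < min (p + 1) (1 - q) + min (1 - p) (q + 1)"
  using bounds not_both_left not_both_right by (auto simp: min_def)

lemma split_weight_bounds: "0 \<le> split_weight p q" "split_weight p q \<le> 1"
  using split_weight_denominator_pos bounds by (auto simp: split_weight_def divide_simps)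

lemma split_weight_eq_0: "p = -1 \<or> q = 1 \<Longrightarrow> split_weight p q = 0"
  using bounds by (auto simp: split_weight_def min_def)

lemma split_weight_eq_1: "p = 1 \<or> q = -1 \<Longrightarrow> split_weight p q = 1"
  using bounds split_weight_denominator_pos by (auto simp: split_weight_def min_def divide_simps)

lemma target_bounds:
  "-1 \<le> fst (target c p q)" "fst (target c p q) \<le> 1"
  "-1 \<le> snd (target c p q)" "snd (target c p q) \<le> 1"
  using split_weight_bounds by (auto simp: target_def split: piece_kind.split)

lemma target_Cross_at_vertex:
  assumes "\<bar>p\<bar> = 1 \<or> \<bar>q\<bar> = 1"
  shows "p < q \<Longrightarrow> target Cross p q = (-1, 1)" and "q < p \<Longrightarrow> target Cross p q = (1, -1)"
  using assms bounds split_weight_eq_0 split_weight_eq_1 by (auto simp: target_def abs_eq_iff')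

end

lemma target_fixes_vertex:
  assumes "(i, j, c) \<in> pieces k" "(x, y) \<in> conf_piece i j c" "x \<noteq> y"
  shows "\<bar>Re x\<bar> = 1 \<Longrightarrow> fst (target c (Re x) (Re y)) = Re x"
    and "\<bar>Re y\<bar> = 1 \<Longrightarrow> snd (target c (Re x) (Re y)) = Re y"
proof -
  interpret conf_re_pair "Re x" "Re y"
    using conf_re_pair_of_piece assms(2,3) .
  note less = conf_piece_Re_less[OF assms]
  show "\<bar>Re x\<bar> = 1 \<Longrightarrow> fst (target c (Re x) (Re y)) = Re x"
    using less bounds split_weight_eq_0 split_weight_eq_1
    by (cases c) (auto simp: target_def abs_eq_iff')
  show "\<bar>Re y\<bar> = 1 \<Longrightarrow> snd (target c (Re x) (Re y)) = Re y"
    using less bounds split_weight_eq_0 split_weight_eq_1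
    by (cases c) (auto simp: target_def abs_eq_iff')
qed

lemma target_agree:
  assumes piece: "(i, j, c) \<in> pieces k" "(x, y) \<in> conf_piece i j c"
    and piece': "(i', j', c') \<in> pieces k" "(x, y) \<in> conf_piece i' j' c'"
    and "x \<noteq> y"
  shows "target c (Re x) (Re y) = target c' (Re x) (Re y)"
proof -
  interpret conf_re_pair "Re x" "Re y"
    using conf_re_pair_of_piece piece(2) \<open>x \<noteq> y\<close> .
  note less = conf_piece_Re_less[OF piece \<open>x \<noteq> y\<close>] conf_piece_Re_less[OF piece' \<open>x \<noteq> y\<close>]
  show ?thesis
  proof (cases "c = c'")
    case False
    with piece(1) piece'(1) less have "i \<noteq> i' \<or> j \<noteq> j'"
      by (cases c; cases c') (auto simp: pieces_def)
    then have "\<bar>Re x\<bar> = 1 \<or> \<bar>Re y\<bar> = 1"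
      using banana_arcs_meet_at_vertex piece(2) piece'(2) by (auto simp: conf_piece_def)
    with False less show ?thesis
      using target_Cross_at_vertex by (cases c; cases c') (auto simp: target_def)
  qed simp
qed

definition slide :: "nat \<Rightarrow> nat \<Rightarrow> piece_kind \<Rightarrow> real \<times> complex \<times> complex \<Rightarrow> complex \<times> complex" where
  "slide i j c = (\<lambda>(l, x, y).
     (arc_pt i ((1 - l) * Re x + l * fst (target c (Re x) (Re y))),
      arc_pt j ((1 - l) * Re y + l * snd (target c (Re x) (Re y)))))"

lemma continuous_on_target:
  "continuous_on (conf2_set (banana k) \<inter> conf_piece i j c) (\<lambda>w. target c (Re (fst w)) (Re (snd w)))"
proof (cases c)
  case Cross
  have "min (Re x + 1) (1 - Re y) + min (1 - Re x) (Re y + 1) \<noteq> 0"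
    if "(x, y) \<in> conf2_set (banana k) \<inter> conf_piece i j c" for x y
  proof -
    interpret conf_re_pair "Re x" "Re y"
      using conf_re_pair_of_piece that by (auto simp: conf2_set_def)
    show ?thesis
      using split_weight_denominator_pos by simp
  qed
  then show ?thesis
    unfolding Cross target_def split_weight_def by (auto intro!: continuous_intros)
qed (simp_all add: target_def continuous_on_const)

lemma continuous_on_slide:
  "continuous_on ({0..1} \<times> (conf2_set (banana k) \<inter> conf_piece i j c)) (slide i j c)"
proof -
  let ?S = "conf2_set (banana k) \<inter> conf_piece i j c"
  have "continuous_on ({0..1} \<times> ?S) (\<lambda>z. target c (Re (fst (snd z))) (Re (snd (snd z))))"
    by (rule continuous_on_compose2[OF continuous_on_target continuous_on_snd]) auto
  then show ?thesis
    unfolding slide_def case_prod_beta by (intro continuous_intros)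
qed

lemma slide_agree:
  assumes piece: "(i, j, c) \<in> pieces k" "(x, y) \<in> conf_piece i j c"
    and piece': "(i', j', c') \<in> pieces k" "(x, y) \<in> conf_piece i' j' c'"
    and "x \<noteq> y"
  shows "slide i j c (l, x, y) = slide i' j' c' (l, x, y)"
proof -
  have same_target: "target c (Re x) (Re y) = target c' (Re x) (Re y)"
    using target_agree[OF piece piece' \<open>x \<noteq> y\<close>] .
  have x: "x \<in> banana_arc i" "x \<in> banana_arc i'" and y: "y \<in> banana_arc j" "y \<in> banana_arc j'"
    using piece(2) piece'(2) by (auto simp: conf_piece_def)
  have "arc_pt i ((1 - l) * Re x + l * fst (target c (Re x) (Re y)))
      = arc_pt i' ((1 - l) * Re x + l * fst (target c (Re x) (Re y)))"
  proof (cases "i = i'")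
    case False
    then have "\<bar>Re x\<bar> = 1"
      using banana_arcs_meet_at_vertex x by blast
    then show ?thesis
      using target_fixes_vertex(1)[OF piece \<open>x \<noteq> y\<close>] by (simp add: arc_pt_vertex left_diff_distrib)
  qed simp
  moreover have "arc_pt j ((1 - l) * Re y + l * snd (target c (Re x) (Re y)))
      = arc_pt j' ((1 - l) * Re y + l * snd (target c (Re x) (Re y)))"
  proof (cases "j = j'")
    case False
    then have "\<bar>Re y\<bar> = 1"
      using banana_arcs_meet_at_vertex y by blast
    then show ?thesis
      using target_fixes_vertex(2)[OF piece \<open>x \<noteq> y\<close>] by (simp add: arc_pt_vertex left_diff_distrib)
  qed simp
  ultimately show ?thesis
    using same_target by (simp add: slide_def)
qed

lemma slide_homotopy_exists:
  obtains h where "continuous_on ({0..1} \<times> conf2_set (banana k)) h"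
    and "\<And>i j c l x y. (i, j, c) \<in> pieces k \<Longrightarrow> l \<in> {0..1} \<Longrightarrow> (x, y) \<in> conf2_set (banana k)
           \<Longrightarrow> (x, y) \<in> conf_piece i j c \<Longrightarrow> h (l, x, y) = slide i j c (l, x, y)"
proof -
  let ?D = "{0..1::real} \<times> conf2_set (banana k)"
  let ?T = "\<lambda>(i, j, c). {0..1::real} \<times> (conf2_set (banana k) \<inter> conf_piece i j c)"
  let ?f = "\<lambda>(i, j, c). slide i j c"
  obtain h where h: "continuous_map (top_of_set ?D) euclidean h"
    "\<And>z idx. \<lbrakk>idx \<in> pieces k; z \<in> topspace (top_of_set ?D) \<inter> ?T idx\<rbrakk> \<Longrightarrow> h z = ?f idx z"
  proof (rule pasting_lemma_exists_closed[of "pieces k" "top_of_set ?D" ?T euclidean ?f])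
    show "finite (pieces k)"
      by (rule finite_pieces)
    show "topspace (top_of_set ?D) \<subseteq> \<Union> (?T ` pieces k)"
    proof
      fix z assume "z \<in> topspace (top_of_set ?D)"
      then obtain l x y where z: "z = (l, x, y)" "l \<in> {0..1}" "(x, y) \<in> conf2_set (banana k)"
        by (cases z) auto
      from z(3) have "x \<in> banana k" "y \<in> banana k"
        by (auto simp: conf2_set_def)
      then obtain i j c where "(i, j, c) \<in> pieces k" "(x, y) \<in> conf_piece i j c"
        by (rule conf_piece_cover)
      with z show "z \<in> \<Union> (?T ` pieces k)"
        by (intro UN_I[of "(i, j, c)"]) auto
    qed
  next
    fix idx assume "idx \<in> pieces k"
    obtain i j c where idx: "idx = (i, j, c)"
      by (cases idx) auto
    have "?T idx = ?D \<inter> ({0..1} \<times> conf_piece i j c)"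
      by (auto simp: idx)
    then show "closedin (top_of_set ?D) (?T idx)"
      by (auto intro!: closedin_closed_Int closed_Times closed_conf_piece)
    have "?D \<inter> ?T idx = ?T idx"
      by (auto simp: idx)
    then show "continuous_map (subtopology (top_of_set ?D) (?T idx)) euclidean (?f idx)"
      using continuous_on_slide[of k i j c] by (simp only: subtopology_subtopology) (simp add: idx)
  next
    fix idx idx' z
    assume "idx \<in> pieces k" "idx' \<in> pieces k" "z \<in> topspace (top_of_set ?D) \<inter> ?T idx \<inter> ?T idx'"
    moreover obtain i j c i' j' c' l x y where "idx = (i, j, c)" "idx' = (i', j', c')" "z = (l, x, y)"
      by (metis prod_cases3)
    ultimately show "?f idx z = ?f idx' z"
      using slide_agree[of i j c k x y i' j' c' l] by (auto simp: conf2_set_def)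
  qed blast
  show ?thesis
  proof
    show "continuous_on ?D h"
      using h(1) by simp
  next
    fix i j c and l :: real and x y
    assume "(i, j, c) \<in> pieces k" "l \<in> {0..1}" "(x, y) \<in> conf2_set (banana k)" "(x, y) \<in> conf_piece i j c"
    then show "h (l, x, y) = slide i j c (l, x, y)"
      using h(2)[of "(i, j, c)" "(l, x, y)"] by auto
  qed
qed

lemma interpolation_bounds:
  fixes a b l :: real
  assumes "-1 \<le> a" "a \<le> 1" "-1 \<le> b" "b \<le> 1" "0 \<le> l" "l \<le> 1"
  shows "-1 \<le> (1 - l) * a + l * b" "(1 - l) * a + l * b \<le> 1"
proof -
  have "(1 - l) * (-1) \<le> (1 - l) * a" "(1 - l) * a \<le> (1 - l) * 1" "l * (-1) \<le> l * b" "l * b \<le> l * 1"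
    using assms by (intro mult_left_mono; simp)+
  then show "-1 \<le> (1 - l) * a + l * b" "(1 - l) * a + l * b \<le> 1"
    by (simp_all add: algebra_simps)
qed

text \<open>Two points on different arcs can only collide at a vertex; while they move towards the
  opposite configuration their common real part, if any, stays away from \<open>\<plusminus>1\<close>.\<close>

lemma (in conf_re_pair) cross_interpolation_off_vertex:
  fixes l f :: real
  assumes "0 \<le> l" "l \<le> 1" "0 \<le> f" "f \<le> 1"
    and meet: "(1 - l) * p + l * (2 * f - 1) = (1 - l) * q + l * (1 - 2 * f)"
  shows "\<bar>(1 - l) * p + l * (2 * f - 1)\<bar> \<noteq> 1"
proof
  assume vertex: "\<bar>(1 - l) * p + l * (2 * f - 1)\<bar> = 1"
  have nonneg: "(1 - l) * (p + 1) \<ge> 0" "(1 - l) * (q + 1) \<ge> 0" "(1 - l) * (1 - p) \<ge> 0"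
    "(1 - l) * (1 - q) \<ge> 0" "l * f \<ge> 0" "l * (1 - f) \<ge> 0"
    using bounds assms by simp_all
  show False
  proof (cases "l = 1")
    case True
    with vertex meet show False by auto
  next
    case False
    then have "1 - l > 0"
      using assms by auto
    show False
    proof (cases "(1 - l) * p + l * (2 * f - 1) = -1")
      case True
      then have "(1 - l) * (p + 1) + 2 * (l * f) = 0" "(1 - l) * (q + 1) + 2 * (l * (1 - f)) = 0"
        using meet by (simp_all add: algebra_simps)
      then have "(1 - l) * (p + 1) = 0" "(1 - l) * (q + 1) = 0"
        using nonneg by linarith+
      with \<open>1 - l > 0\<close> not_both_left show False by auto
    next
      case False
      then have "(1 - l) * p + l * (2 * f - 1) = 1"
        using vertex by auto
      then have "(1 - l) * (1 - p) + 2 * (l * (1 - f)) = 0" "(1 - l) * (1 - q) + 2 * (l * f) = 0"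
        using meet by (simp_all add: algebra_simps)
      then have "(1 - l) * (1 - p) = 0" "(1 - l) * (1 - q) = 0"
        using nonneg by linarith+
      with \<open>1 - l > 0\<close> not_both_right show False by auto
    qed
  qed
qed

lemma slide_mem_conf2_set:
  assumes piece: "(i, j, c) \<in> pieces k" "(x, y) \<in> conf_piece i j c"
    and "x \<noteq> y" "0 \<le> l" "l \<le> 1"
  shows "slide i j c (l, x, y) \<in> conf2_set (banana k)"
proof -
  interpret conf_re_pair "Re x" "Re y"
    using conf_re_pair_of_piece piece(2) \<open>x \<noteq> y\<close> .
  define p' where "p' = (1 - l) * Re x + l * fst (target c (Re x) (Re y))"
  define q' where "q' = (1 - l) * Re y + l * snd (target c (Re x) (Re y))"
  have slide: "slide i j c (l, x, y) = (arc_pt i p', arc_pt j q')"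
    by (simp add: slide_def p'_def q'_def)
  have "-1 \<le> p'" "p' \<le> 1" "-1 \<le> q'" "q' \<le> 1"
    unfolding p'_def q'_def using interpolation_bounds target_bounds bounds \<open>0 \<le> l\<close> \<open>l \<le> 1\<close>
    by presburger+
  moreover have "i < k" "j < k"
    using piece(1) by (auto simp: pieces_def)
  ultimately have "arc_pt i p' \<in> banana k" "arc_pt j q' \<in> banana k"
    by (auto simp: mem_banana_iff intro: arc_pt_in_banana_arc)
  moreover have "arc_pt i p' \<noteq> arc_pt j q'"
  proof
    assume collide: "arc_pt i p' = arc_pt j q'"
    then have "p' = q'"
      by (metis Re_arc_pt)
    note less = conf_piece_Re_less[OF piece \<open>x \<noteq> y\<close>]
    show False
    proof (cases c)
      case Cross
      then have "i \<noteq> j"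
        using piece(1) by (auto simp: pieces_def)
      then have "\<bar>p'\<bar> = 1"
        using collide banana_arcs_meet_at_vertex \<open>-1 \<le> p'\<close> \<open>p' \<le> 1\<close>
        by (metis Re_arc_pt arc_pt_in_banana_arc)
      with \<open>p' = q'\<close> show False
        using cross_interpolation_off_vertex[of l "split_weight (Re x) (Re y)"] split_weight_bounds
          \<open>0 \<le> l\<close> \<open>l \<le> 1\<close> by (simp add: p'_def q'_def Cross target_def)
    next
      case Ordered
      then have "q' - p' = (1 - l) * (Re y - Re x) + 2 * l"
        by (simp add: p'_def q'_def target_def algebra_simps)
      moreover have "(1 - l) * (Re y - Re x) > 0 \<or> l > 0"
        using less(1)[OF Ordered] \<open>0 \<le> l\<close> \<open>l \<le> 1\<close> by (cases "l = 1") auto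
      ultimately show False
        using \<open>p' = q'\<close> \<open>0 \<le> l\<close> \<open>l \<le> 1\<close> less(1)[OF Ordered]
        by (smt (verit) mult_nonneg_nonneg)
    next
      case Reversed
      then have "p' - q' = (1 - l) * (Re x - Re y) + 2 * l"
        by (simp add: p'_def q'_def target_def algebra_simps)
      moreover have "(1 - l) * (Re x - Re y) > 0 \<or> l > 0"
        using less(2)[OF Reversed] \<open>0 \<le> l\<close> \<open>l \<le> 1\<close> by (cases "l = 1") auto
      ultimately show False
        using \<open>p' = q'\<close> \<open>0 \<le> l\<close> \<open>l \<le> 1\<close> less(2)[OF Reversed]
        by (smt (verit) mult_nonneg_nonneg)
    qed
  qed
  ultimately show ?thesis
    by (simp add: slide conf2_set_def)
qed

lemma slide_start: "(x, y) \<in> conf_piece i j c \<Longrightarrow> slide i j c (0, x, y) = (x, y)"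
  by (simp add: slide_def conf_piece_def arc_pt_Re)

definition opposite_conf :: "nat \<Rightarrow> (complex \<times> complex) set" where
  "opposite_conf k = {(arc_pt i u, arc_pt j (-u)) | i j u. i < k \<and> j < k \<and> i \<noteq> j \<and> -1 \<le> u \<and> u \<le> 1}"

lemma opposite_confI:
  "i < k \<Longrightarrow> j < k \<Longrightarrow> i \<noteq> j \<Longrightarrow> -1 \<le> u \<Longrightarrow> u \<le> 1 \<Longrightarrow> (arc_pt i u, arc_pt j (-u)) \<in> opposite_conf k"
  by (auto simp: opposite_conf_def)

lemma vertex_confs_mem_opposite_conf:
  assumes "k \<ge> 2"
  shows "(-1, 1) \<in> opposite_conf k" "(1, -1) \<in> opposite_conf k"
  using opposite_confI[of 0 k 1 "-1"] opposite_confI[of 0 k 1 1] assms by simp_all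

lemma slide_end:
  assumes "(i, j, c) \<in> pieces k" "(x, y) \<in> conf_piece i j c" "x \<noteq> y" "k \<ge> 2"
  shows "slide i j c (1, x, y) \<in> opposite_conf k"
proof (cases c)
  case Cross
  interpret conf_re_pair "Re x" "Re y"
    using conf_re_pair_of_piece assms(2,3) .
  from Cross have "i < k" "j < k" "i \<noteq> j"
    using assms(1) by (auto simp: pieces_def)
  then show ?thesis
    using opposite_confI[of i k j "2 * split_weight (Re x) (Re y) - 1"] split_weight_bounds
    by (simp add: slide_def target_def Cross)
qed (use vertex_confs_mem_opposite_conf[OF assms(4)] in \<open>simp_all add: slide_def target_def\<close>)

lemma opposite_conf_subset: "opposite_conf k \<subseteq> conf2_set (banana k)"
proof
  fix w assume "w \<in> opposite_conf k"
  then obtain i j u where w: "w = (arc_pt i u, arc_pt j (-u))" "i < k" "j < k" "i \<noteq> j" "-1 \<le> u" "u \<le> 1"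
    by (auto simp: opposite_conf_def)
  have "arc_pt i u \<noteq> arc_pt j (-u)"
  proof
    assume collide: "arc_pt i u = arc_pt j (-u)"
    then have "u = 0"
      by (metis Re_arc_pt equal_neg_zero)
    with arc_pt_inj(1)[OF _ collide] \<open>i \<noteq> j\<close> show False
      by simp
  qed
  moreover have "arc_pt i u \<in> banana_arc i" "arc_pt j (-u) \<in> banana_arc j"
    using w by (simp_all add: arc_pt_in_banana_arc)
  ultimately show "w \<in> conf2_set (banana k)"
    using w by (auto simp: conf2_set_def mem_banana_iff)
qed

lemma slide_fixes_opposite_conf:
  assumes "-1 \<le> u" "u \<le> 1"
  shows "slide i j Cross (1, arc_pt i u, arc_pt j (-u)) = (arc_pt i u, arc_pt j (-u))"
proof -
  have "split_weight u (-u) = (u + 1) / 2"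
    using assms by (simp add: split_weight_def)
  then show ?thesis
    by (simp add: slide_def target_def field_simps)
qed

lemma conf2_set_banana_cover:
  assumes "(x, y) \<in> conf2_set (banana k)"
  obtains i j c where "(i, j, c) \<in> pieces k" "(x, y) \<in> conf_piece i j c" "x \<noteq> y"
proof -
  from assms have "x \<in> banana k" "y \<in> banana k" "x \<noteq> y"
    by (auto simp: conf2_set_def)
  then show ?thesis
    using conf_piece_cover that by blast
qed

lemma slide_homotopy_properties:
  fixes h :: "real \<times> complex \<times> complex \<Rightarrow> complex \<times> complex"
  assumes h_slide: "\<And>i j c l x y. (i, j, c) \<in> pieces k \<Longrightarrow> l \<in> {0..1} \<Longrightarrow> (x, y) \<in> conf2_set (banana k)
           \<Longrightarrow> (x, y) \<in> conf_piece i j c \<Longrightarrow> h (l, x, y) = slide i j c (l, x, y)"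
    and "k \<ge> 2" and conf: "(x, y) \<in> conf2_set (banana k)"
  shows "l \<in> {0..1} \<Longrightarrow> h (l, x, y) \<in> conf2_set (banana k)"
    and "h (0, x, y) = (x, y)"
    and "h (1, x, y) \<in> opposite_conf k"
    and "(x, y) \<in> opposite_conf k \<Longrightarrow> h (1, x, y) = (x, y)"
proof -
  obtain i j c where piece: "(i, j, c) \<in> pieces k" "(x, y) \<in> conf_piece i j c" "x \<noteq> y"
    using conf by (rule conf2_set_banana_cover)
  note h_piece = h_slide[OF piece(1) _ conf piece(2)]
  show "l \<in> {0..1} \<Longrightarrow> h (l, x, y) \<in> conf2_set (banana k)"
    using h_piece slide_mem_conf2_set[OF piece] by simp
  show "h (0, x, y) = (x, y)"
    using h_piece[of 0] slide_start[OF piece(2)] by simp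
  show "h (1, x, y) \<in> opposite_conf k"
    using h_piece[of 1] slide_end[OF piece \<open>k \<ge> 2\<close>] by simp
  assume "(x, y) \<in> opposite_conf k"
  then obtain i' j' u where xy: "x = arc_pt i' u" "y = arc_pt j' (-u)" "i' < k" "j' < k" "i' \<noteq> j'"
    "-1 \<le> u" "u \<le> 1"
    unfolding opposite_conf_def by blast
  then have "(i', j', Cross) \<in> pieces k" "(x, y) \<in> conf_piece i' j' Cross"
    by (auto simp: pieces_def conf_piece_def intro: arc_pt_in_banana_arc)
  then show "h (1, x, y) = (x, y)"
    using h_slide[of i' j' Cross 1 x y] conf slide_fixes_opposite_conf xy by simp
qed

theorem conf2_banana_homotopy_eqv_opposite_conf:
  assumes "k \<ge> 2"
  shows "conf2_set (banana k) homotopy_eqv opposite_conf k"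
proof -
  obtain h where h_cont: "continuous_on ({0..1} \<times> conf2_set (banana k)) h"
    and h_slide: "\<And>i j c l x y. (i, j, c) \<in> pieces k \<Longrightarrow> l \<in> {0..1} \<Longrightarrow> (x, y) \<in> conf2_set (banana k)
           \<Longrightarrow> (x, y) \<in> conf_piece i j c \<Longrightarrow> h (l, x, y) = slide i j c (l, x, y)"
    using slide_homotopy_exists by blast
  note h = slide_homotopy_properties[OF h_slide assms]
  have "homotopic_with_canon (\<lambda>x. True) (conf2_set (banana k)) (conf2_set (banana k)) id (\<lambda>w. h (1, w))"
    using h_cont h(1,2) by (auto simp: homotopic_with intro!: exI[of _ h])
  moreover have "retraction (conf2_set (banana k)) (opposite_conf k) (\<lambda>w. h (1, w))"
    unfolding retraction_def using opposite_conf_subset[of k] h(3,4)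
    by (auto intro!: continuous_on_compose2[OF h_cont] continuous_intros)
  ultimately show ?thesis
    by (rule deformation_retract_imp_homotopy_eqv)
qed

section \<open>The opposite configurations form a graph\<close>

definition arc_pairs :: "nat \<Rightarrow> (nat \<times> nat) list" where
  "arc_pairs k = filter (\<lambda>p. fst p \<noteq> snd p) (List.product [0..<k] [0..<k])"

lemma set_arc_pairs: "set (arc_pairs k) = {(i, j). i < k \<and> j < k \<and> i \<noteq> j}"
  by (auto simp: arc_pairs_def)

lemma distinct_arc_pairs: "distinct (arc_pairs k)"
  by (simp add: arc_pairs_def distinct_product)

lemma length_arc_pairs: "length (arc_pairs k) = k * (k - 1)"
proof -
  have "set (arc_pairs k) = {..<k} \<times> {..<k} - (\<lambda>i. (i, i)) ` {..<k}"
    by (auto simp: set_arc_pairs)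
  then have "card (set (arc_pairs k)) = k * k - k"
    by (simp add: card_Diff_subset card_image inj_on_def image_subset_iff)
  then show ?thesis
    by (simp add: distinct_card[OF distinct_arc_pairs] diff_mult_distrib2)
qed

definition opposite_graph_edges :: "nat \<Rightarrow> (nat \<times> nat) list" where
  "opposite_graph_edges k = map (\<lambda>_. (0, 1)) (arc_pairs k)"

text \<open>Vertex \<open>0\<close> of the graph is realised by the configuration \<open>(-1, 1)\<close>, vertex \<open>1\<close> by
  \<open>(1, -1)\<close>, and the edge belonging to the \<open>m\<close>-th pair \<open>(a, b)\<close> of distinct arcs by the path
  \<open>u \<mapsto> (arc_pt a u, arc_pt b (-u))\<close> through \<open>opposite_conf k\<close>.\<close>

definition opposite_graph_map :: "nat \<Rightarrow> nat \<times> real \<Rightarrow> complex \<times> complex" where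
  "opposite_graph_map k p =
    (if even (fst p) then (arc_pt (fst (arc_pairs k ! (fst p div 2))) (2 * snd p - 1),
                            arc_pt (snd (arc_pairs k ! (fst p div 2))) (1 - 2 * snd p))
     else if fst p = 1 then (-1, 1) else (1, -1))"

lemma graph_cells_opposite_graph:
  "graph_cells {0, 1} (opposite_graph_edges k) =
     {(2 * m, t) | m t. m < length (arc_pairs k) \<and> 0 \<le> t \<and> t \<le> 1} \<union> {(1, 0), (3, 0)}"
  by (auto simp: graph_cells_def opposite_graph_edges_def)

lemma opposite_graph_map_graph_glue:
  "p \<in> graph_cells {0, 1} (opposite_graph_edges k)
     \<Longrightarrow> opposite_graph_map k (graph_glue (opposite_graph_edges k) p) = opposite_graph_map k p"
  unfolding graph_cells_opposite_graph
  by (auto simp: graph_glue_def Let_def opposite_graph_map_def opposite_graph_edges_def)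

lemma graph_glue_opposite_graph_image:
  "graph_glue (opposite_graph_edges k) ` graph_cells {0, 1} (opposite_graph_edges k) \<subseteq>
     {(2 * m, t) | m t. m < length (arc_pairs k) \<and> 0 < t \<and> t < 1} \<union> {(1, 0), (3, 0)}"
  unfolding graph_cells_opposite_graph
  by (auto simp: graph_glue_def Let_def opposite_graph_edges_def)

lemma opposite_graph_map_image:
  assumes "k \<ge> 2"
  shows "opposite_graph_map k ` graph_cells {0, 1} (opposite_graph_edges k) = opposite_conf k"
proof
  show "opposite_graph_map k ` graph_cells {0, 1} (opposite_graph_edges k) \<subseteq> opposite_conf k"
  proof
    fix z assume "z \<in> opposite_graph_map k ` graph_cells {0, 1} (opposite_graph_edges k)"
    then obtain p where p: "p \<in> graph_cells {0, 1} (opposite_graph_edges k)" "z = opposite_graph_map k p"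
      by blast
    from p(1) consider (edge) m t where "p = (2 * m, t)" "m < length (arc_pairs k)" "0 \<le> t" "t \<le> 1"
      | (vertex) "p = (1, 0) \<or> p = (3, 0)"
      unfolding graph_cells_opposite_graph by blast
    then show "z \<in> opposite_conf k"
    proof cases
      case edge
      obtain a b where ab: "arc_pairs k ! m = (a, b)"
        by fastforce
      then have "(a, b) \<in> set (arc_pairs k)"
        using edge(2) by (metis nth_mem)
      then have "a < k" "b < k" "a \<noteq> b"
        by (auto simp: set_arc_pairs)
      then show ?thesis
        using opposite_confI[of a k b "2 * t - 1"] edge ab p(2) by (simp add: opposite_graph_map_def)
    next
      case vertex
      then show ?thesis
        using vertex_confs_mem_opposite_conf[OF assms] p(2) by (auto simp: opposite_graph_map_def)
    qed
  qed
  show "opposite_conf k \<subseteq> opposite_graph_map k ` graph_cells {0, 1} (opposite_graph_edges k)"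
  proof
    fix z assume "z \<in> opposite_conf k"
    then obtain a b u where z: "z = (arc_pt a u, arc_pt b (-u))" "a < k" "b < k" "a \<noteq> b" "-1 \<le> u" "u \<le> 1"
      unfolding opposite_conf_def by blast
    then have "(a, b) \<in> set (arc_pairs k)"
      by (simp add: set_arc_pairs)
    then obtain m where m: "m < length (arc_pairs k)" "arc_pairs k ! m = (a, b)"
      by (metis in_set_conv_nth)
    have "opposite_graph_map k (2 * m, (u + 1) / 2) = z"
      using m z(1) by (simp add: opposite_graph_map_def field_simps)
    moreover have "(2 * m, (u + 1) / 2) \<in> graph_cells {0, 1} (opposite_graph_edges k)"
      unfolding graph_cells_opposite_graph using m z
      by (intro UnI1 CollectI exI[of _ m] exI[of _ "(u + 1) / 2"]) auto
    ultimately show "z \<in> opposite_graph_map k ` graph_cells {0, 1} (opposite_graph_edges k)"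
      by (metis image_eqI)
  qed
qed

lemma opposite_graph_map_edge_inj:
  assumes "m < length (arc_pairs k)" "m' < length (arc_pairs k)" "0 < t" "t < 1"
    and eq: "opposite_graph_map k (2 * m, t) = opposite_graph_map k (2 * m', t')"
  shows "m = m'" "t = t'"
proof -
  have "\<bar>2 * t - 1\<bar> < 1" "\<bar>1 - 2 * t\<bar> < 1"
    using assms(3,4) by auto
  moreover have "arc_pt (fst (arc_pairs k ! m)) (2 * t - 1) = arc_pt (fst (arc_pairs k ! m')) (2 * t' - 1)"
    "arc_pt (snd (arc_pairs k ! m)) (1 - 2 * t) = arc_pt (snd (arc_pairs k ! m')) (1 - 2 * t')"
    using eq by (simp_all add: opposite_graph_map_def)
  ultimately have "fst (arc_pairs k ! m) = fst (arc_pairs k ! m')" "snd (arc_pairs k ! m) = snd (arc_pairs k ! m')"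
    and "2 * t - 1 = 2 * t' - 1"
    using arc_pt_inj by blast+
  then show "m = m'" "t = t'"
    using nth_eq_iff_index_eq[OF distinct_arc_pairs assms(1,2)] by (simp_all add: prod_eq_iff)
qed

lemma inj_on_opposite_graph_map:
  "inj_on (opposite_graph_map k)
     ({(2 * m, t) | m t. m < length (arc_pairs k) \<and> 0 < t \<and> t < 1} \<union> {(1, 0), (3, 0)})"
proof (rule inj_onI)
  have edge_Re: "\<bar>Re (fst (opposite_graph_map k (2 * m, t)))\<bar> < 1" if "0 < t" "t < 1" for m t
    using that by (simp add: opposite_graph_map_def)
  have vertex_Re: "\<bar>Re (fst (opposite_graph_map k p))\<bar> = 1" if "p \<in> {(1, 0), (3, 0)}" for p
    using that by (auto simp: opposite_graph_map_def)
  fix p p'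
  assume p: "p \<in> {(2 * m, t) | m t. m < length (arc_pairs k) \<and> 0 < t \<and> t < 1} \<union> {(1, 0), (3, 0)}"
    and p': "p' \<in> {(2 * m, t) | m t. m < length (arc_pairs k) \<and> 0 < t \<and> t < 1} \<union> {(1, 0), (3, 0)}"
    and eq: "opposite_graph_map k p = opposite_graph_map k p'"
  from p consider (edge) m t where "p = (2 * m, t)" "m < length (arc_pairs k)" "0 < t" "t < 1"
    | (vertex) "p \<in> {(1, 0), (3, 0)}"
    by blast
  then show "p = p'"
  proof cases
    case edge
    from p' consider (edge') m' t' where "p' = (2 * m', t')" "m' < length (arc_pairs k)" "0 < t'" "t' < 1"
      | (vertex') "p' \<in> {(1, 0), (3, 0)}"
      by blast
    then show ?thesis
    proof cases
      case edge'
      with edge eq show ?thesis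
        using opposite_graph_map_edge_inj[of m k m' t t'] by simp
    next
      case vertex'
      with edge eq show ?thesis
        using edge_Re[of t m] vertex_Re[of p'] by simp
    qed
  next
    case vertex
    from p' consider (edge') m' t' where "p' = (2 * m', t')" "0 < t'" "t' < 1"
      | (vertex') "p' \<in> {(1, 0), (3, 0)}"
      by blast
    then show ?thesis
    proof cases
      case edge'
      with vertex eq show ?thesis
        using edge_Re[of t' m'] vertex_Re[of p] by simp
    next
      case vertex'
      with vertex eq show ?thesis
        by (auto simp: opposite_graph_map_def)
    qed
  qed
qed

lemma opposite_graph_map_fibres:
  assumes "p \<in> graph_cells {0, 1} (opposite_graph_edges k)" "p' \<in> graph_cells {0, 1} (opposite_graph_edges k)"
  shows "graph_glue (opposite_graph_edges k) p = graph_glue (opposite_graph_edges k) p'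
    \<longleftrightarrow> opposite_graph_map k p = opposite_graph_map k p'"
proof -
  let ?q = "graph_glue (opposite_graph_edges k)"
  have "?q p = ?q p' \<longleftrightarrow> opposite_graph_map k (?q p) = opposite_graph_map k (?q p')"
    using assms graph_glue_opposite_graph_image[of k]
    by (intro inj_on_eq_iff[OF inj_on_opposite_graph_map, symmetric]) blast+
  also have "\<dots> \<longleftrightarrow> opposite_graph_map k p = opposite_graph_map k p'"
    using assms by (simp add: opposite_graph_map_graph_glue)
  finally show ?thesis .
qed

lemma graph_realization_opposite_graph:
  assumes "k \<ge> 2"
  shows "graph_realization {0, 1} (opposite_graph_edges k) homeomorphic_space top_of_set (opposite_conf k)"
  unfolding graph_realization_def
proof (rule quotient_topology_homeomorphic_space)
  have cells: "topspace (graph_cells_top {0, 1} (opposite_graph_edges k)) = graph_cells {0, 1} (opposite_graph_edges k)"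
    by (simp add: graph_cells_top_def)
  show "compact_space (graph_cells_top {0, 1} (opposite_graph_edges k))"
    by (simp add: compact_space_graph_cells_top)
  show "Hausdorff_space (top_of_set (opposite_conf k))"
    by (simp add: Hausdorff_space_subtopology)
  show image: "opposite_graph_map k ` topspace (graph_cells_top {0, 1} (opposite_graph_edges k))
      = topspace (top_of_set (opposite_conf k))"
    using opposite_graph_map_image[OF assms] unfolding cells by simp
  have "continuous_on UNIV (\<lambda>t. opposite_graph_map k (n, t))" for n
    by (cases "even n") (simp_all add: opposite_graph_map_def continuous_intros)
  then show "continuous_map (graph_cells_top {0, 1} (opposite_graph_edges k)) (top_of_set (opposite_conf k))
      (opposite_graph_map k)"
    using image by (intro continuous_map_into_subtopology continuous_map_graph_cells_top) auto
qed (simp add: opposite_graph_map_fibres graph_cells_top_def)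

lemma connected_opposite_conf: "connected (opposite_conf k)"
proof -
  let ?path = "\<lambda>(a, b). (\<lambda>u. (arc_pt a u, arc_pt b (-u))) ` {-1..1::real}"
  have "opposite_conf k = \<Union> (?path ` set (arc_pairs k))"
  proof
    show "opposite_conf k \<subseteq> \<Union> (?path ` set (arc_pairs k))"
      by (auto simp: opposite_conf_def set_arc_pairs)
    show "\<Union> (?path ` set (arc_pairs k)) \<subseteq> opposite_conf k"
      by (auto simp: set_arc_pairs intro!: opposite_confI)
  qed
  moreover have "(-1, 1) \<in> \<Inter> (?path ` set (arc_pairs k))"
    by (force intro: image_eqI[of _ _ "-1"])
  moreover have "connected (?path ab)" for ab
    by (cases ab) (auto intro!: connected_continuous_image continuous_intros)
  ultimately show ?thesis
    by (metis (no_types, lifting) connected_Union empty_iff imageE)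
qed

lemma connected_space_opposite_graph:
  assumes "k \<ge> 2"
  shows "connected_space (graph_realization {0, 1} (opposite_graph_edges k))"
  using homeomorphic_connected_space[OF graph_realization_opposite_graph[OF assms]] connected_opposite_conf
  by (simp add: connected_space_subtopology)

lemma graph_betti1_opposite_graph:
  assumes "k \<ge> 2"
  shows "graph_betti1 {0, 1} (opposite_graph_edges k) = int (k * (k - 1)) - 1"
proof -
  have "top_of_set (opposite_conf k) \<noteq> trivial_topology"
    using vertex_confs_mem_opposite_conf[OF assms]
    by (metis empty_iff null_topspace_iff_trivial topspace_euclidean_subtopology)
  then have "graph_realization {0, 1} (opposite_graph_edges k) \<noteq> trivial_topology"
    using homeomorphic_empty_space[OF graph_realization_opposite_graph[OF assms]] by blast
  then show ?thesis
    using graph_betti1_connected[OF connected_space_opposite_graph[OF assms]]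
    by (simp add: length_arc_pairs opposite_graph_edges_def)
qed

theorem mainTheorem5:
  fixes k :: nat
  assumes "k \<ge> 3"
  shows "\<exists>V E. fin_graph V E \<and> connected_space (graph_realization V E)
           \<and> graph_betti1 V E \<ge> int k - 1
           \<and> Conf 2 (subtopology euclidean (banana k)) homotopy_equivalent_space graph_realization V E"
proof -
  let ?V = "{0, 1} :: nat set" and ?E = "opposite_graph_edges k"
  have k: "k \<ge> 2"
    using assms by simp
  have "Conf 2 (top_of_set (banana k)) homotopy_equivalent_space top_of_set (conf2_set (banana k))"
    by (rule homeomorphic_imp_homotopy_equivalent_space[OF Conf2_homeomorphic_conf2_set])
  also have "\<dots> homotopy_equivalent_space top_of_set (opposite_conf k)"
    by (rule conf2_banana_homotopy_eqv_opposite_conf[OF k])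
  also have "\<dots> homotopy_equivalent_space graph_realization ?V ?E"
    using graph_realization_opposite_graph[OF k] homeomorphic_space_sym
      homeomorphic_imp_homotopy_equivalent_space by blast
  finally have homotopy_eqv: "Conf 2 (top_of_set (banana k)) homotopy_equivalent_space graph_realization ?V ?E" .
  have "k \<le> k * (k - 1)"
    using mult_le_mono2[of 1 "k - 1" k] k by simp
  then have "graph_betti1 ?V ?E \<ge> int k - 1"
    unfolding graph_betti1_opposite_graph[OF k] by linarith
  then show ?thesis
    using connected_space_opposite_graph[OF k] homotopy_eqv
    by (intro exI[of _ ?V] exI[of _ ?E]) (auto simp: fin_graph_def opposite_graph_edges_def)
qed

end
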